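(* Let $p>2$ be a prime and let $V'=\{\mathbf{v}\in\{\pm1\}^{4p} : \mathbf{v}_{4p}=1,\ \sum_{i=1}^{4p}\mathbf{v}_i=0\}$. If $S\subseteq V'$ contains no two (distinct) vectors $\mathbf{u},\mathbf{v}$ with $\langle\mathbf{u},\mathbf{v}\rangle=0$, then $|S|\le \sum_{k=0}^{p-1}\binom{4p}{k}\le 2\binom{4p}{p-1}$.
   Context: $\langle\cdot,\cdot\rangle$ is the standard inner product on $\mathbb{R}^{4p}$. *)

theory Defs
  imports "HOL-Computational_Algebra.Primes"
begin

text \<open>Vectors in {+-1}^n are represented as functions nat => int; coordinate i (1-based)
  of the paper is the value at index i-1, for i-1 < n; outside {0..<n} the value is 0
  (extensional representation, so the set is finite).\<close>

definition pm1_vecs :: "nat \<Rightarrow> (nat \<Rightarrow> int) set" where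
  "pm1_vecs n = {v. (\<forall>i<n. v i = 1 \<or> v i = -1) \<and> (\<forall>i\<ge>n. v i = 0)}"

definition ip :: "nat \<Rightarrow> (nat \<Rightarrow> int) \<Rightarrow> (nat \<Rightarrow> int) \<Rightarrow> int" where
  "ip n u v = (\<Sum>i<n. u i * v i)"

definition Vprime :: "nat \<Rightarrow> (nat \<Rightarrow> int) set" where
  "Vprime p = {v \<in> pm1_vecs (4*p). v (4*p - 1) = 1 \<and> (\<Sum>i<4*p. v i) = 0}"

end

theory Submission
  imports Defs "HOL-Number_Theory.Cong" "Jordan_Normal_Form.Determinant"
begin

text \<open>
  Frankl--Wilson argument. A vector of \<open>Vprime p\<close> is determined by the set of its \<open>+1\<close>
  coordinates, a \<open>2p\<close>-subset of the \<open>4p\<close> indices that always contains the last one, and two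
  such vectors are orthogonal exactly when these sets meet in \<open>p\<close> elements. On the resulting
  family consider \<open>M(A,B) = binom(|A \<inter> B| - 1, p - 1)\<close>: its diagonal entries
  \<open>binom(2p - 1, p - 1)\<close> are prime to \<open>p\<close>, while \<open>1 \<le> |A \<inter> B| < 2p\<close> and \<open>|A \<inter> B| \<noteq> p\<close>
  make every off-diagonal entry divisible by \<open>p\<close>, so \<open>det M\<close> is not divisible by \<open>p\<close>.
  But \<open>binom(x - 1, p - 1)\<close> is the signed count of the subsets of \<open>A \<inter> B\<close> of size below \<open>p\<close>,
  so \<open>M\<close> factors through the \<open>\<Sum>k<p. binom(4p, k)\<close> subsets of size below \<open>p\<close> and
  would be singular if the family were larger.
\<close>

lemma binomial_pred_alternating_sum:
  assumes "x \<ge> 1"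
  shows "int ((x - 1) choose m) = (\<Sum>j\<le>m. (-1) ^ (m - j) * int (x choose j))"
proof (induction m)
  case 0
  then show ?case by simp
next
  case (Suc m)
  have "(\<Sum>j\<le>Suc m. (-1) ^ (Suc m - j) * int (x choose j))
      = int (x choose Suc m) - (\<Sum>j\<le>m. (-1) ^ (m - j) * int (x choose j))"
    by (simp add: Suc_diff_le sum_negf[symmetric])
  also have "\<dots> = int ((x - 1) choose Suc m)"
    using Suc assms by (cases x) simp_all
  finally show ?case ..
qed

lemma sum_subsets_card_atMost:
  fixes f :: "nat \<Rightarrow> 'a::comm_semiring_1"
  assumes "finite X"
  shows "(\<Sum>T | T \<subseteq> X \<and> card T \<le> m. f (card T)) = (\<Sum>j\<le>m. of_nat (card X choose j) * f j)"
proof -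
  have "finite {T. T \<subseteq> X \<and> card T \<le> m}"
    using assms by (auto intro: finite_subset[of _ "Pow X"])
  then have "(\<Sum>T | T \<subseteq> X \<and> card T \<le> m. f (card T))
      = (\<Sum>j\<le>m. \<Sum>T \<in> {T. T \<subseteq> X \<and> card T \<le> m \<and> card T = j}. f (card T))"
    by (subst sum.group[symmetric, of _ "{..m}" card]) auto
  also have "\<dots> = (\<Sum>j\<le>m. \<Sum>T | T \<subseteq> X \<and> card T = j. f j)"
    by (intro sum.cong) auto
  also have "\<dots> = (\<Sum>j\<le>m. of_nat (card X choose j) * f j)"
    by (simp add: n_subsets[OF assms])
  finally show ?thesis .
qed

lemma card_subsets_card_atMost:
  "finite X \<Longrightarrow> card {T. T \<subseteq> X \<and> card T \<le> m} = (\<Sum>j\<le>m. card X choose j)"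
  using sum_subsets_card_atMost[of X "\<lambda>_. 1::nat" m] by simp

lemma sum_signs_subsets_card_atMost:
  assumes "finite X" "X \<noteq> {}"
  shows "(\<Sum>T | T \<subseteq> X \<and> card T \<le> m. (-1::int) ^ (m - card T)) = int ((card X - 1) choose m)"
proof -
  have "card X \<ge> 1"
    using assms by (simp add: Suc_le_eq card_gt_0_iff)
  have "(\<Sum>T | T \<subseteq> X \<and> card T \<le> m. (-1::int) ^ (m - card T))
      = (\<Sum>j\<le>m. int (card X choose j) * (-1) ^ (m - j))"
    by (rule sum_subsets_card_atMost[OF assms(1)])
  also have "\<dots> = int ((card X - 1) choose m)"
    using binomial_pred_alternating_sum[OF \<open>card X \<ge> 1\<close>] by (simp add: mult.commute)
  finally show ?thesis .
qed

lemma binomial_prime_add_cong_1: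
  assumes "prime p" "j < p"
  shows "[(p + j) choose j = 1] (mod p)"
  using assms(2)
proof (induction j)
  case 0
  then show ?case by simp
next
  case (Suc j)
  have "[Suc (p + j) = Suc j] (mod p)"
    unfolding cong_def by (metis add_Suc_right mod_add_self1)
  moreover have "[(p + j) choose j = 1] (mod p)"
    using Suc by simp
  ultimately have "[Suc (p + j) * ((p + j) choose j) = Suc j * 1] (mod p)"
    by (rule cong_mult)
  then have "[(p + Suc j choose Suc j) * Suc j = 1 * Suc j] (mod p)"
    by (simp only: Suc_times_binomial_eq add_Suc_right mult.commute[of 1])
  moreover have "coprime (Suc j) p"
  proof -
    have "\<not> p dvd Suc j"
      using Suc.prems by (auto dest: dvd_imp_le)
    then show ?thesis
      using prime_imp_coprime[OF assms(1)] coprime_commute by blast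
  qed
  ultimately show ?case
    by (simp only: cong_mult_rcancel_nat)
qed

lemma prime_not_dvd_central_binomial:
  assumes "prime p"
  shows "\<not> p dvd ((2 * p - 1) choose (p - 1))"
proof -
  have "p > 1" using assms prime_gt_1_nat by blast
  then have "[(2 * p - 1) choose (p - 1) = 1] (mod p)"
    using binomial_prime_add_cong_1[OF assms, of "p - 1"] by (simp add: mult_2)
  with \<open>p > 1\<close> show ?thesis
    by (simp add: cong_def dvd_eq_mod_eq_0)
qed

lemma prime_dvd_binomial_pred:
  assumes "prime p" "y < 2 * p - 1" "y \<noteq> p - 1"
  shows "p dvd (y choose (p - 1))"
proof (cases "y < p - 1")
  case True
  then show ?thesis by (simp add: binomial_eq_0)
next
  case False
  with assms have y: "p \<le> y" "y - (p - 1) < p" by auto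
  have "fact (p - 1) * fact (y - (p - 1)) * (y choose (p - 1)) = (fact y :: nat)"
    using y by (intro binomial_fact_lemma) auto
  moreover have "p dvd fact y" "\<not> p dvd fact (p - 1)" "\<not> p dvd fact (y - (p - 1))"
    using y prime_gt_0_nat[OF assms(1)] by (simp_all add: prime_dvd_fact_iff[OF assms(1)])
  ultimately show ?thesis
    using assms(1) by (metis prime_dvd_mult_iff)
qed

lemma sum_binomial_atMost_le_twice:
  assumes "3 * m \<le> n + 1"
  shows "(\<Sum>k\<le>m. n choose k) \<le> 2 * (n choose m)"
  using assms
proof (induction m)
  case 0
  then show ?case by simp
next
  case (Suc m)
  have "2 * Suc m * (n choose m) \<le> (n - m) * (n choose m)"
    using Suc.prems by (intro mult_right_mono) auto
  also have "\<dots> = Suc m * (n choose Suc m)"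
    using binomial_absorb_comp[of n m] binomial_absorption[of m n] by simp
  finally have "Suc m * (2 * (n choose m)) \<le> Suc m * (n choose Suc m)"
    by (simp only: ac_simps)
  then have "2 * (n choose m) \<le> n choose Suc m"
    by (rule mult_left_le_imp_le) simp
  then show ?case
    using Suc by simp
qed

lemma det_dvd_diff_prod_diag:
  fixes A :: "'a::comm_ring_1 mat"
  assumes A: "A \<in> carrier_mat n n"
    and off_diag: "\<And>i j. i < n \<Longrightarrow> j < n \<Longrightarrow> i \<noteq> j \<Longrightarrow> q dvd A $$ (i, j)"
  shows "q dvd det A - (\<Prod>i = 0..<n. A $$ (i, i))"
proof -
  let ?P = "{\<sigma>. \<sigma> permutes {0..<n}}"
  let ?term = "\<lambda>\<sigma>. signof \<sigma> * (\<Prod>i = 0..<n. A $$ (i, \<sigma> i))"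
  have "det A = ?term id + (\<Sum>\<sigma> \<in> ?P - {id}. ?term \<sigma>)"
    unfolding det_def'[OF A] by (rule sum.remove) (simp_all add: finite_permutations)
  moreover have "q dvd (\<Sum>\<sigma> \<in> ?P - {id}. ?term \<sigma>)"
  proof (rule dvd_sum)
    fix \<sigma> assume "\<sigma> \<in> ?P - {id}"
    then have \<sigma>: "\<sigma> permutes {0..<n}" "\<sigma> \<noteq> id" by auto
    then obtain i where i: "\<sigma> i \<noteq> i" by (metis eq_id_iff)
    then have "i < n" "\<sigma> i < n"
      using permutes_not_in[OF \<sigma>(1)] permutes_in_image[OF \<sigma>(1)] by fastforce+
    then have "q dvd A $$ (i, \<sigma> i)" and "A $$ (i, \<sigma> i) dvd (\<Prod>i = 0..<n. A $$ (i, \<sigma> i))"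
      using off_diag[of i "\<sigma> i"] i by (auto intro: dvd_prodI)
    then show "q dvd ?term \<sigma>"
      by (meson dvd_mult dvd_trans)
  qed
  ultimately show ?thesis
    by (simp add: signof_id)
qed

lemma det_mat_sum_fewer_terms:
  fixes c w :: "nat \<Rightarrow> nat \<Rightarrow> 'a::comm_ring_1"
  assumes "N < m"
  shows "det (mat m m (\<lambda>(i, j). \<Sum>k<N. c i k * w k j)) = 0"
proof -
  define C where "C = mat m m (\<lambda>(i, k). if k < N then c i k else 0)"
  define W where "W = mat m m (\<lambda>(k, j). if k < N then w k j else 0)"
  have C: "C \<in> carrier_mat m m" and W: "W \<in> carrier_mat m m"
    by (simp_all add: C_def W_def)
  have "mat m m (\<lambda>(i, j). \<Sum>k<N. c i k * w k j) = C * W"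
  proof (rule eq_matI)
    fix i j assume "i < dim_row (C * W)" "j < dim_col (C * W)"
    then have "(C * W) $$ (i, j) = (\<Sum>k = 0..<m. if k < N then c i k * w k j else 0)"
      by (auto simp: C_def W_def scalar_prod_def intro!: sum.cong)
    also have "\<dots> = (\<Sum>k \<in> {0..<m} \<inter> {..<N}. c i k * w k j)"
      by (simp add: sum.If_cases lessThan_def)
    also have "{0..<m} \<inter> {..<N} = {..<N}"
      using assms by auto
    finally show "mat m m (\<lambda>(i, j). \<Sum>k<N. c i k * w k j) $$ (i, j) = (C * W) $$ (i, j)"
      using \<open>i < dim_row (C * W)\<close> \<open>j < dim_col (C * W)\<close> by (simp add: C_def W_def)
  qed (simp_all add: C_def W_def)
  moreover have "W = mat\<^sub>r m m (\<lambda>k. if k = N then 0\<^sub>v m else row W k)"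
    by (rule eq_matI) (auto simp: W_def)
  then have "det W = 0"
    using det_row_0[OF assms, of "row W"] W by (auto simp: row_carrier)
  ultimately show ?thesis
    using det_mult[OF C W] by simp
qed

lemma card_le_of_factorization_mod_prime:
  fixes C :: "'a \<Rightarrow> 'b \<Rightarrow> int" and W :: "'b \<Rightarrow> 'a \<Rightarrow> int"
  assumes "finite S" "finite T" "prime q"
    and diag: "\<And>u. u \<in> S \<Longrightarrow> \<not> q dvd (\<Sum>t\<in>T. C u t * W t u)"
    and off_diag: "\<And>u v. u \<in> S \<Longrightarrow> v \<in> S \<Longrightarrow> u \<noteq> v \<Longrightarrow> q dvd (\<Sum>t\<in>T. C u t * W t v)"
  shows "card S \<le> card T"
proof (rule ccontr)
  assume "\<not> card S \<le> card T"
  then have less: "card T < card S" by simp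
  obtain s where s: "bij_betw s {0..<card S} S"
    using ex_bij_betw_nat_finite[OF \<open>finite S\<close>] by blast
  obtain t where t: "bij_betw t {..<card T} T"
    using ex_bij_betw_nat_finite[OF \<open>finite T\<close>] by (auto simp: lessThan_atLeast0)
  define D where "D = mat (card S) (card S) (\<lambda>(i, j). \<Sum>k<card T. C (s i) (t k) * W (t k) (s j))"
  have D: "D \<in> carrier_mat (card S) (card S)"
    by (simp add: D_def)
  have D_entry: "D $$ (i, j) = (\<Sum>x\<in>T. C (s i) x * W x (s j))" if "i < card S" "j < card S" for i j
    using that sum.reindex_bij_betw[OF t, of "\<lambda>x. C (s i) x * W x (s j)"] by (simp add: D_def)
  have s_in: "s i \<in> S" if "i < card S" for i
    using s that by (auto simp: bij_betw_def)
  have "q dvd det D - (\<Prod>i = 0..<card S. D $$ (i, i))"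
  proof (rule det_dvd_diff_prod_diag[OF D])
    fix i j assume "i < card S" "j < card S" "i \<noteq> j"
    moreover from this have "s i \<noteq> s j"
      using s by (auto simp: bij_betw_def inj_on_def)
    ultimately show "q dvd D $$ (i, j)"
      by (simp add: D_entry off_diag s_in)
  qed
  moreover have "det D = 0"
    unfolding D_def by (rule det_mat_sum_fewer_terms[OF less])
  ultimately have "q dvd (\<Prod>i = 0..<card S. D $$ (i, i))"
    by (simp add: dvd_minus_iff)
  then obtain i where "i < card S" "q dvd D $$ (i, i)"
    using prime_dvd_prod_iff[OF finite_atLeastLessThan \<open>prime q\<close>] by auto
  then show False
    using diag[OF s_in] by (simp add: D_entry)
qed

lemma card_Int_less_of_card_eq:
  assumes "finite A" "finite B" "card A = k" "card B = k" "A \<noteq> B"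
  shows "card (A \<inter> B) < k"
proof -
  have "card (A \<inter> B) \<le> k"
    using card_mono[OF assms(1), of "A \<inter> B"] assms(3) by simp
  moreover have "card (A \<inter> B) \<noteq> k"
  proof
    assume "card (A \<inter> B) = k"
    then have "A \<inter> B = A"
      using card_subset_eq[OF assms(1) Int_lower1, of B] assms(3) by simp
    then have "A \<subseteq> B"
      by blast
    then have "A = B"
      using card_subset_eq[OF assms(2)] assms(3,4) by simp
    with \<open>A \<noteq> B\<close> show False ..
  qed
  ultimately show ?thesis by simp
qed

lemma card_uniform_family_le_sum_binomial:
  fixes F :: "nat set set"
  assumes p: "prime p"
    and F: "\<And>A. A \<in> F \<Longrightarrow> A \<subseteq> {..<n} \<and> card A = 2 * p"
    and inter: "\<And>A B. A \<in> F \<Longrightarrow> B \<in> F \<Longrightarrow> A \<noteq> B \<Longrightarrow> card (A \<inter> B) \<notin> {0, p}"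
  shows "card F \<le> (\<Sum>k<p. n choose k)"
proof -
  define T where "T = {X. X \<subseteq> {..<n} \<and> card X \<le> p - 1}"
  define C where "C (A :: nat set) (X :: nat set) = (if X \<subseteq> A then (-1::int) ^ (p - 1 - card X) else 0)" for A X
  define W where "W (X :: nat set) (B :: nat set) = (of_bool (X \<subseteq> B) :: int)" for X B
  have fin_A: "finite A" if "A \<in> F" for A
    using F[OF that] finite_subset by blast
  have fin_T: "finite T"
    unfolding T_def by (rule finite_subset[of _ "Pow {..<n}"]) auto
  have entry: "(\<Sum>X\<in>T. C A X * W X B) = int ((card (A \<inter> B) - 1) choose (p - 1))"
    if "A \<in> F" "A \<inter> B \<noteq> {}" for A B
  proof -
    have subsets: "{X\<in>T. X \<subseteq> A \<inter> B} = {X. X \<subseteq> A \<inter> B \<and> card X \<le> p - 1}"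
      using F[OF that(1)] by (auto simp: T_def)
    have "(\<Sum>X\<in>T. C A X * W X B) = (\<Sum>X\<in>T. if X \<subseteq> A \<inter> B then (-1) ^ (p - 1 - card X) else 0)"
      by (intro sum.cong) (auto simp: C_def W_def)
    also have "\<dots> = (\<Sum>X | X \<subseteq> A \<inter> B \<and> card X \<le> p - 1. (-1) ^ (p - 1 - card X))"
      unfolding sum.inter_filter[OF fin_T, symmetric] subsets ..
    also have "\<dots> = int ((card (A \<inter> B) - 1) choose (p - 1))"
      using fin_A[OF that(1)] that(2) by (intro sum_signs_subsets_card_atMost) auto
    finally show ?thesis .
  qed
  have "p > 0"
    using p prime_gt_0_nat by blast
  have "card F \<le> card T"
  proof (rule card_le_of_factorization_mod_prime[OF _ fin_T, where q = "int p" and C = C and W = W])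
    show "finite F"
      using F by (intro finite_subset[of F "Pow {..<n}"]) auto
    fix A assume A: "A \<in> F"
    have "A \<noteq> {}"
      using F[OF A] \<open>p > 0\<close> by auto
    then show "\<not> int p dvd (\<Sum>X\<in>T. C A X * W X A)"
      using entry[OF A] F[OF A] prime_not_dvd_central_binomial[OF p] by simp
    fix B assume B: "B \<in> F" and "A \<noteq> B"
    then have "card (A \<inter> B) \<noteq> 0" "card (A \<inter> B) \<noteq> p"
      using inter[OF A B] by auto
    moreover have "card (A \<inter> B) < 2 * p"
      using card_Int_less_of_card_eq[OF fin_A[OF A] fin_A[OF B] _ _ \<open>A \<noteq> B\<close>] F[OF A] F[OF B] by simp
    ultimately have "p dvd ((card (A \<inter> B) - 1) choose (p - 1))"
      by (intro prime_dvd_binomial_pred[OF p]) auto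
    moreover have "A \<inter> B \<noteq> {}"
      using \<open>card (A \<inter> B) \<noteq> 0\<close> by auto
    ultimately show "int p dvd (\<Sum>X\<in>T. C A X * W X B)"
      using entry[OF A] by simp
  qed (use p in simp)
  also have "card T = (\<Sum>k\<le>p - 1. n choose k)"
    by (simp add: T_def card_subsets_card_atMost)
  also have "\<dots> = (\<Sum>k<p. n choose k)"
    using \<open>p > 0\<close> by (intro sum.cong) auto
  finally show ?thesis .
qed

definition pos_support :: "nat \<Rightarrow> (nat \<Rightarrow> int) \<Rightarrow> nat set" where
  "pos_support n v = {i. i < n \<and> v i = 1}"

lemma pos_support_subset: "pos_support n v \<subseteq> {..<n}"
  by (auto simp: pos_support_def)

lemma pm1_vecs_eq_pos_support:
  "v \<in> pm1_vecs n \<Longrightarrow> i < n \<Longrightarrow> v i = 2 * of_bool (i \<in> pos_support n v) - 1"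
  by (auto simp: pm1_vecs_def pos_support_def)

lemma finite_pos_support [simp]: "finite (pos_support n v)"
  using pos_support_subset finite_subset by blast

lemma sum_of_bool_lessThan:
  fixes n :: nat
  assumes "X \<subseteq> {..<n}"
  shows "(\<Sum>i<n. of_bool (i \<in> X)) = (of_nat (card X) :: 'a::semiring_1)"
  using assms by (simp add: Int_absorb1)

lemma sum_pm1_vec:
  assumes "v \<in> pm1_vecs n"
  shows "(\<Sum>i<n. v i) = 2 * int (card (pos_support n v)) - int n"
proof -
  have "(\<Sum>i<n. v i) = (\<Sum>i<n. 2 * of_bool (i \<in> pos_support n v) - 1)"
    using pm1_vecs_eq_pos_support[OF assms] by (intro sum.cong) auto
  also have "\<dots> = 2 * (\<Sum>i<n. of_bool (i \<in> pos_support n v)) - int n"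
    by (simp add: sum_subtractf sum_distrib_left del: sum_of_bool_eq)
  finally show ?thesis
    by (simp only: sum_of_bool_lessThan[OF pos_support_subset])
qed

lemma ip_pm1_vecs:
  assumes "u \<in> pm1_vecs n" "v \<in> pm1_vecs n"
  shows "ip n u v = 4 * int (card (pos_support n u \<inter> pos_support n v))
      - 2 * int (card (pos_support n u)) - 2 * int (card (pos_support n v)) + int n"
proof -
  let ?U = "pos_support n u" and ?V = "pos_support n v"
  have "ip n u v = (\<Sum>i<n. 4 * of_bool (i \<in> ?U \<inter> ?V) - 2 * of_bool (i \<in> ?U) - 2 * of_bool (i \<in> ?V) + 1)"
    unfolding ip_def
    by (intro sum.cong) (auto simp: pm1_vecs_eq_pos_support[OF assms(1)] pm1_vecs_eq_pos_support[OF assms(2)])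
  also have "\<dots> = 4 * (\<Sum>i<n. of_bool (i \<in> ?U \<inter> ?V)) - 2 * (\<Sum>i<n. of_bool (i \<in> ?U))
      - 2 * (\<Sum>i<n. of_bool (i \<in> ?V)) + int n"
    by (simp add: sum.distrib sum_subtractf sum_distrib_left del: sum_of_bool_eq)
  finally show ?thesis
    using pos_support_subset[of n u]
    by (simp only: sum_of_bool_lessThan[OF pos_support_subset] sum_of_bool_lessThan[OF le_infI1])
qed

lemma inj_on_pos_support: "inj_on (pos_support n) (pm1_vecs n)"
proof
  fix u v assume u: "u \<in> pm1_vecs n" and v: "v \<in> pm1_vecs n" and eq: "pos_support n u = pos_support n v"
  show "u = v"
  proof
    fix i show "u i = v i"
    proof (cases "i < n")
      case True
      then show ?thesis
        using pm1_vecs_eq_pos_support[OF u True] pm1_vecs_eq_pos_support[OF v True] eq by simp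
    next
      case False
      then show ?thesis
        using u v by (simp add: pm1_vecs_def)
    qed
  qed
qed

lemma card_pos_support_Vprime:
  "v \<in> Vprime p \<Longrightarrow> card (pos_support (4 * p) v) = 2 * p"
  using sum_pm1_vec[of v "4 * p"] by (simp add: Vprime_def)

lemma ip_Vprime:
  assumes "u \<in> Vprime p" "v \<in> Vprime p"
  shows "ip (4 * p) u v = 4 * (int (card (pos_support (4 * p) u \<inter> pos_support (4 * p) v)) - int p)"
  using assms ip_pm1_vecs[of u "4 * p" v] card_pos_support_Vprime[OF assms(1)] card_pos_support_Vprime[OF assms(2)]
  by (simp add: Vprime_def)

lemma card_Int_pos_support_Vprime:
  assumes "u \<in> Vprime p" "v \<in> Vprime p" "p > 0" "ip (4 * p) u v \<noteq> 0"
  shows "card (pos_support (4 * p) u \<inter> pos_support (4 * p) v) \<notin> {0, p}"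
proof -
  have "4 * p - 1 \<in> pos_support (4 * p) u \<inter> pos_support (4 * p) v"
    using assms(1-3) by (simp add: Vprime_def pos_support_def)
  then have "card (pos_support (4 * p) u \<inter> pos_support (4 * p) v) \<noteq> 0"
    by auto
  moreover have "card (pos_support (4 * p) u \<inter> pos_support (4 * p) v) \<noteq> p"
    using ip_Vprime[OF assms(1,2)] assms(4) by auto
  ultimately show ?thesis
    by simp
qed

theorem mainTheorem4:
  fixes p :: nat and S :: "(nat \<Rightarrow> int) set"
  assumes "prime p" and "p > 2"
    and "S \<subseteq> Vprime p"
    and "\<forall>u\<in>S. \<forall>v\<in>S. u \<noteq> v \<longrightarrow> ip (4*p) u v \<noteq> 0"
  shows "card S \<le> (\<Sum>k<p. (4*p) choose k) \<and> (\<Sum>k<p. (4*p) choose k) \<le> 2 * ((4*p) choose (p - 1))"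
proof
  let ?A = "pos_support (4 * p)"
  have "inj_on ?A S"
    using inj_on_subset[OF inj_on_pos_support] assms(3) by (auto simp: Vprime_def)
  then have "card S = card (?A ` S)"
    by (simp add: card_image)
  also have "\<dots> \<le> (\<Sum>k<p. (4*p) choose k)"
  proof (rule card_uniform_family_le_sum_binomial[OF assms(1)])
    show "A \<subseteq> {..<4 * p} \<and> card A = 2 * p" if "A \<in> ?A ` S" for A
      using that assms(3) pos_support_subset card_pos_support_Vprime by blast
    show "card (A \<inter> B) \<notin> {0, p}" if "A \<in> ?A ` S" "B \<in> ?A ` S" and "A \<noteq> B" for A B
    proof -
      obtain u v where uv: "u \<in> S" "v \<in> S" and AB: "A = ?A u" "B = ?A v"
        using \<open>A \<in> ?A ` S\<close> \<open>B \<in> ?A ` S\<close> by blast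
      with \<open>A \<noteq> B\<close> have "u \<noteq> v"
        by blast
      then show ?thesis
        unfolding AB using uv assms(2-4) by (intro card_Int_pos_support_Vprime) auto
    qed
  qed
  finally show "card S \<le> (\<Sum>k<p. (4*p) choose k)" .
  have "(\<Sum>k<p. (4*p) choose k) = (\<Sum>k\<le>p - 1. (4*p) choose k)"
    using assms(2) by (intro sum.cong) auto
  also have "\<dots> \<le> 2 * ((4*p) choose (p - 1))"
    by (rule sum_binomial_atMost_le_twice) simp
  finally show "(\<Sum>k<p. (4*p) choose k) \<le> 2 * ((4*p) choose (p - 1))" .
qed

end
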